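(* Let $N\ge2$, $\Lambda^3=(-1,1)^3$, and let $\mathcal F$ be a diffeomorphism from $[-1,1]^3$ onto $\overline\Omega$, $\Omega=\mathcal F(\Lambda^3)\subset\mathbb R^3$. For $m,n,l\ge1$ define on $\Lambda^3$ $$\boldsymbol\Phi^1_{m,n,l}=\big(\psi_{m+1}(\xi_1)\phi_n(\xi_2)\phi_l(\xi_3),\,-\phi_m(\xi_1)\psi_{n+1}(\xi_2)\phi_l(\xi_3),\,0\big)^{\intercal},$$ $$\boldsymbol\Phi^2_{m,n,l}=\big(\psi_{m+1}(\xi_1)\phi_n(\xi_2)\phi_l(\xi_3),\,0,\,-\phi_m(\xi_1)\phi_n(\xi_2)\psi_{l+1}(\xi_3)\big)^{\intercal},$$ $$\boldsymbol\Phi^x_{n,l}=\big(0,\,\psi_{n+1}(\xi_2)\phi_l(\xi_3),\,-\phi_n(\xi_2)\psi_{l+1}(\xi_3)\big)^{\intercal},\quad \boldsymbol\Phi^y_{m,l}=\big(\psi_{m+1}(\xi_1)\phi_l(\xi_3),\,0,\,-\phi_m(\xi_1)\psi_{l+1}(\xi_3)\big)^{\intercal},$$ $$\boldsymbol\Phi^z_{m,n}=\big(\psi_{m+1}(\xi_1)\phi_n(\xi_2),\,-\phi_m(\xi_1)\psi_{n+1}(\xi_2),\,0\big)^{\intercal},$$ and let $\tilde{\boldsymbol\Phi}=\mathcal F^{\rm div}[\boldsymbol\Phi]$ for each of these. Then $$\boldsymbol H_{N,0}(\mathrm{div}0;\Omega):=\mathrm{span}\{\tilde{\boldsymbol\Phi}^1_{m,n,l},\tilde{\boldsymbol\Phi}^2_{m,n,l},\tilde{\boldsymbol\Phi}^x_{n,l},\tilde{\boldsymbol\Phi}^y_{m,l},\tilde{\boldsymbol\Phi}^z_{m,n}\}_{m,n,l=1}^{N-1}$$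 is a conforming divergence-free approximation space for $\boldsymbol H_0(\mathrm{div}0;\Omega)$; in particular each listed function has zero normal component on $\partial\Omega$ and zero divergence in $\Omega$.
   Context: $L_n$ Legendre polynomial; $P_n^{(\alpha,\beta)}$ classical Jacobi polynomial; $P_n^{(-1,-1)}(\xi)=\frac{\xi^2-1}{4}P_{n-2}^{(1,1)}(\xi)$ ($n\ge2$). $\psi_m(\xi)=\frac{\sqrt{2(2m-1)}}{m-1}P_m^{(-1,-1)}(\xi)$ ($m\ge2$), $\phi_n(\xi)=\sqrt{\frac{2n+1}{2}}L_n(\xi)$ ($n\ge0$). Piola transformation: $\mathcal F^{\rm div}[\boldsymbol\Phi](\boldsymbol x)=\frac{\partial_{\boldsymbol\xi}\boldsymbol x}{\det(\partial_{\boldsymbol\xi}\boldsymbol x)}\boldsymbol\Phi(\mathcal F^{-1}(\boldsymbol x))$, $\partial_{\boldsymbol\xi}\boldsymbol x$ the Jacobian of $\mathcal F$. $\boldsymbol H_0(\mathrm{div}0;\Omega)=\{\boldsymbol v\in L^2(\Omega)^3:\nabla\cdot\boldsymbol v\in L^2,\ \boldsymbol n\cdot\boldsymbol v|_{\partial\Omega}=0,\ \nabla\cdot\boldsymbol v=0\}$. *)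

theory Defs
  imports "HOL-Analysis.Analysis" "HOL-Analysis.Cross3"
begin

text \<open>Classical Jacobi polynomial (explicit formula, valid for all real parameters):
  P_n^(a,b)(x) = sum_{s=0}^n C(n+a, n-s) C(n+b, s) ((x-1)/2)^s ((x+1)/2)^(n-s).\<close>
definition jacobiP :: "real \<Rightarrow> real \<Rightarrow> nat \<Rightarrow> real \<Rightarrow> real" where
  "jacobiP a b n x =
     (\<Sum>s\<le>n. ((real n + a) gchoose (n - s)) * ((real n + b) gchoose s)
              * ((x - 1) / 2) ^ s * ((x + 1) / 2) ^ (n - s))"

definition legendre :: "nat \<Rightarrow> real \<Rightarrow> real" where
  "legendre n x = jacobiP 0 0 n x"

definition psi :: "nat \<Rightarrow> real \<Rightarrow> real" where
  "psi m x = sqrt (2 * (2 * real m - 1)) / (real m - 1) * jacobiP (-1) (-1) m x"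

definition phi :: "nat \<Rightarrow> real \<Rightarrow> real" where
  "phi n x = sqrt ((2 * real n + 1) / 2) * legendre n x"

definition Phi1 :: "nat \<Rightarrow> nat \<Rightarrow> nat \<Rightarrow> real^3 \<Rightarrow> real^3" where
  "Phi1 m n l \<xi> = vector [psi (m+1) (\<xi>$1) * phi n (\<xi>$2) * phi l (\<xi>$3),
                          - phi m (\<xi>$1) * psi (n+1) (\<xi>$2) * phi l (\<xi>$3), 0]"

definition Phi2 :: "nat \<Rightarrow> nat \<Rightarrow> nat \<Rightarrow> real^3 \<Rightarrow> real^3" where
  "Phi2 m n l \<xi> = vector [psi (m+1) (\<xi>$1) * phi n (\<xi>$2) * phi l (\<xi>$3), 0,
                          - phi m (\<xi>$1) * phi n (\<xi>$2) * psi (l+1) (\<xi>$3)]"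

definition PhiX :: "nat \<Rightarrow> nat \<Rightarrow> real^3 \<Rightarrow> real^3" where
  "PhiX n l \<xi> = vector [0, psi (n+1) (\<xi>$2) * phi l (\<xi>$3),
                         - phi n (\<xi>$2) * psi (l+1) (\<xi>$3)]"

definition PhiY :: "nat \<Rightarrow> nat \<Rightarrow> real^3 \<Rightarrow> real^3" where
  "PhiY m l \<xi> = vector [psi (m+1) (\<xi>$1) * phi l (\<xi>$3), 0,
                         - phi m (\<xi>$1) * psi (l+1) (\<xi>$3)]"

definition PhiZ :: "nat \<Rightarrow> nat \<Rightarrow> real^3 \<Rightarrow> real^3" where
  "PhiZ m n \<xi> = vector [psi (m+1) (\<xi>$1) * phi n (\<xi>$2),
                         - phi m (\<xi>$1) * psi (n+1) (\<xi>$2), 0]"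

abbreviation cube :: "(real^3) set" where "cube \<equiv> cbox (- 1) 1"
abbreviation open_cube :: "(real^3) set" where "open_cube \<equiv> box (- 1) 1"

fun Ck_on :: "nat \<Rightarrow> (real^3) set \<Rightarrow> (real^3 \<Rightarrow> real) \<Rightarrow> bool" where
  "Ck_on 0 U g = continuous_on U g"
| "Ck_on (Suc k) U g = (continuous_on U g \<and> (\<forall>x\<in>U. g differentiable (at x)) \<and>
      (\<forall>i. Ck_on k U (\<lambda>x. frechet_derivative g (at x) (axis i 1))))"

definition smooth_on :: "(real^3) set \<Rightarrow> (real^3 \<Rightarrow> real^3) \<Rightarrow> bool" where
  "smooth_on U F = (\<forall>k i. Ck_on k U (\<lambda>x. F x $ i))"

definition jac :: "(real^3 \<Rightarrow> real^3) \<Rightarrow> real^3 \<Rightarrow> real^3^3" where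
  "jac F \<xi> = matrix (frechet_derivative F (at \<xi>))"

definition piola :: "(real^3 \<Rightarrow> real^3) \<Rightarrow> (real^3 \<Rightarrow> real^3) \<Rightarrow> real^3 \<Rightarrow> real^3" where
  "piola F Phi x = (let \<xi> = inv_into cube F x in
                      (1 / det (jac F \<xi>)) *\<^sub>R (jac F \<xi> *v Phi \<xi>))"

definition divergence :: "(real^3 \<Rightarrow> real^3) \<Rightarrow> real^3 \<Rightarrow> real" where
  "divergence v x = (\<Sum>i\<in>UNIV. frechet_derivative v (at x) (axis i 1) $ i)"

definition basisN :: "nat \<Rightarrow> (real^3 \<Rightarrow> real^3) \<Rightarrow> (real^3 \<Rightarrow> real^3) set" where
  "basisN N F = piola F ` (
      {Phi1 m n l | m n l. m \<in> {1..N-1} \<and> n \<in> {1..N-1} \<and> l \<in> {1..N-1}}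
    \<union> {Phi2 m n l | m n l. m \<in> {1..N-1} \<and> n \<in> {1..N-1} \<and> l \<in> {1..N-1}}
    \<union> {PhiX n l | n l. n \<in> {1..N-1} \<and> l \<in> {1..N-1}}
    \<union> {PhiY m l | m l. m \<in> {1..N-1} \<and> l \<in> {1..N-1}}
    \<union> {PhiZ m n | m n. m \<in> {1..N-1} \<and> n \<in> {1..N-1}})"

definition fspan :: "(real^3 \<Rightarrow> real^3) set \<Rightarrow> (real^3 \<Rightarrow> real^3) set" where
  "fspan B = {v. \<exists>S c. finite S \<and> S \<subseteq> B \<and> v = (\<lambda>x. \<Sum>b\<in>S. c b *\<^sub>R b x)}"

definition HN0_div0 :: "nat \<Rightarrow> (real^3 \<Rightarrow> real^3) \<Rightarrow> (real^3 \<Rightarrow> real^3) set" where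
  "HN0_div0 N F = fspan (basisN N F)"

end

(*
  Each reference field has the form P(xi_i) q(xi_j) R(xi_k) e_i - p(xi_i) Q(xi_j) R(xi_k) e_j with
  P' = p and Q' = q, because psi_(m+1)' = phi_m; such a field is divergence free, and since
  psi_(m+1) vanishes at +-1 its normal component vanishes on the faces of the cube.
  The contravariant Piola transform divides the divergence by det J (the Piola identity, a
  consequence of the symmetry of the second derivatives of F), and it preserves the flux through
  the image of a face, because cross3 (J a) (J b) . J c = det J * (cross3 a b . c).
  All three properties are linear in the field, so they pass to the span.
*)
theory Submission
  imports Defs
begin

section \<open>Jacobi polynomials\<close>

lemma gbinomial_Suc_mult:
  fixes a :: "'a::field_char_0"
  shows "(a gchoose Suc k) * of_nat (Suc k) = (a gchoose k) * (a - of_nat k)"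
  using gbinomial_mult_1[of a k] by (simp add: algebra_simps)

lemma jacobiP_derivative_coefficient:
  fixes \<alpha> \<beta> :: real
  assumes "t \<le> n"
  shows "(\<alpha> gchoose (n - t)) * (\<beta> gchoose Suc t) * real (Suc t)
       + (\<alpha> gchoose Suc (n - t)) * (\<beta> gchoose t) * real (Suc (n - t))
       = (\<alpha> + \<beta> - real n) * ((\<alpha> gchoose (n - t)) * (\<beta> gchoose t))"
proof -
  have e1: "(\<alpha> gchoose (n - t)) * (\<beta> gchoose Suc t) * real (Suc t)
      = (\<alpha> gchoose (n - t)) * (\<beta> gchoose t) * (\<beta> - real t)"
    by (simp only: mult.assoc gbinomial_Suc_mult)
  have "(\<alpha> gchoose Suc (n - t)) * (\<beta> gchoose t) * real (Suc (n - t))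
      = ((\<alpha> gchoose Suc (n - t)) * real (Suc (n - t))) * (\<beta> gchoose t)"
    by (simp only: mult_ac)
  also have "\<dots> = (\<alpha> gchoose (n - t)) * (\<beta> gchoose t) * (\<alpha> - real (n - t))"
    by (subst gbinomial_Suc_mult) (simp only: mult_ac)
  finally show ?thesis
    unfolding e1 using assms by (simp add: algebra_simps)
qed

lemma has_real_derivative_jacobiP:
  "(jacobiP a b (Suc n) has_real_derivative (real n + a + b + 2) / 2 * jacobiP (a + 1) (b + 1) n x) (at x)"
proof -
  define u where "u = (x - 1) / 2"
  define w where "w = (x + 1) / 2"
  define \<alpha> where "\<alpha> = real n + (a + 1)"
  define \<beta> where "\<beta> = real n + (b + 1)"
  define c where "c s = (\<alpha> gchoose (Suc n - s)) * (\<beta> gchoose s)" for s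
  have P: "jacobiP a b (Suc n) = (\<lambda>x. \<Sum>s\<le>Suc n. c s * ((x - 1) / 2) ^ s * ((x + 1) / 2) ^ (Suc n - s))"
    unfolding jacobiP_def c_def \<alpha>_def \<beta>_def by (simp add: fun_eq_iff algebra_simps)
  have "((\<lambda>x. \<Sum>s\<le>Suc n. c s * ((x - 1) / 2) ^ s * ((x + 1) / 2) ^ (Suc n - s)) has_real_derivative
      (\<Sum>s\<le>Suc n. c s * real s * u ^ (s - 1) * w ^ (Suc n - s) / 2)
      + (\<Sum>s\<le>Suc n. c s * real (Suc n - s) * u ^ s * w ^ (n - s) / 2)) (at x)"
    unfolding u_def w_def sum.distrib[symmetric]
    by (rule DERIV_sum) (rule derivative_eq_intros refl | simp add: algebra_simps)+
  also have "(\<Sum>s\<le>Suc n. c s * real s * u ^ (s - 1) * w ^ (Suc n - s) / 2)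
      = (\<Sum>t\<le>n. c (Suc t) * real (Suc t) * u ^ t * w ^ (n - t) / 2)"
    by (simp only: sum.atMost_Suc_shift) simp
  also have "(\<Sum>s\<le>Suc n. c s * real (Suc n - s) * u ^ s * w ^ (n - s) / 2)
      = (\<Sum>t\<le>n. c t * real (Suc n - t) * u ^ t * w ^ (n - t) / 2)"
    by (simp only: sum.atMost_Suc) simp
  also have "(\<Sum>t\<le>n. c (Suc t) * real (Suc t) * u ^ t * w ^ (n - t) / 2)
      + (\<Sum>t\<le>n. c t * real (Suc n - t) * u ^ t * w ^ (n - t) / 2)
      = (\<Sum>t\<le>n. (c (Suc t) * real (Suc t) + c t * real (Suc n - t)) * u ^ t * w ^ (n - t) / 2)"
    by (simp add: sum.distrib[symmetric] ring_distribs add_divide_distrib)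
  also have "\<dots> = (real n + a + b + 2) / 2 * jacobiP (a + 1) (b + 1) n x"
  proof -
    have "c (Suc t) * real (Suc t) + c t * real (Suc n - t)
        = (\<alpha> + \<beta> - real n) * ((\<alpha> gchoose (n - t)) * (\<beta> gchoose t))" if "t \<le> n" for t
      using jacobiP_derivative_coefficient[OF that, of \<alpha> \<beta>] that by (simp add: c_def Suc_diff_le)
    then show ?thesis
      unfolding jacobiP_def sum_distrib_left u_def w_def \<alpha>_def \<beta>_def
      by (intro sum.cong refl) (simp add: algebra_simps)
  qed
  finally show ?thesis
    unfolding P .
qed

lemma jacobiP_at_1: "jacobiP a b n 1 = (real n + a) gchoose n"
proof -
  have "jacobiP a b n 1 = (\<Sum>s\<le>n. if s = 0 then (real n + a) gchoose n else 0)"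
    unfolding jacobiP_def by (intro sum.cong refl) (auto simp: power_0_left)
  then show ?thesis by simp
qed

lemma jacobiP_at_minus_1: "jacobiP a b n (- 1) = (- 1) ^ n * ((real n + b) gchoose n)"
proof -
  have "jacobiP a b n (- 1) = (\<Sum>s\<le>n. if s = n then (- 1) ^ n * ((real n + b) gchoose n) else 0)"
    unfolding jacobiP_def by (intro sum.cong refl) (auto simp: power_0_left)
  then show ?thesis by simp
qed

lemma jacobiP_differentiable: "jacobiP a b n differentiable (at x)"
proof (cases n)
  case 0
  then have "jacobiP a b n = (\<lambda>x. 1)" by (simp add: fun_eq_iff jacobiP_def)
  then show ?thesis by simp
next
  case (Suc k)
  then show ?thesis
    using has_real_derivative_jacobiP real_differentiable_def by blast
qed

lemma phi_differentiable: "phi n differentiable (at x)"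
  unfolding phi_def[abs_def] legendre_def
  by (intro derivative_intros jacobiP_differentiable)

lemma psi_Suc_at_boundary:
  assumes "\<bar>x\<bar> = 1"
  shows "psi (Suc m) x = 0"
proof -
  have "(real (Suc m) - 1) gchoose Suc m = 0"
    by (simp flip: binomial_gbinomial)
  moreover have "x = 1 \<or> x = - 1" using assms by linarith
  ultimately show ?thesis
    unfolding psi_def by (auto simp: jacobiP_at_1 jacobiP_at_minus_1)
qed

text \<open>The hypothesis \<open>m \<ge> 1\<close> is needed: the normalising factor of \<open>psi 1\<close> divides by zero,
  so \<open>psi 1 = 0\<close>.\<close>
lemma has_real_derivative_psi_Suc:
  assumes "m \<ge> 1"
  shows "(psi (Suc m) has_real_derivative phi m x) (at x)"
proof -
  define C where "C = sqrt (2 * (2 * real (Suc m) - 1)) / (real (Suc m) - 1)"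
  have "(psi (Suc m) has_real_derivative
      C * ((real m + - 1 + - 1 + 2) / 2 * jacobiP (- 1 + 1) (- 1 + 1) m x)) (at x)"
    unfolding psi_def[abs_def] C_def by (rule DERIV_cmult[OF has_real_derivative_jacobiP])
  moreover have "C * ((real m + - 1 + - 1 + 2) / 2 * jacobiP (- 1 + 1) (- 1 + 1) m x) = phi m x"
  proof -
    have "sqrt ((2 * real m + 1) / 2) = sqrt (2 * (2 * real m + 1) / 4)"
      by (rule arg_cong[where f = sqrt]) simp
    also have "\<dots> = sqrt (2 * (2 * real m + 1)) / 2"
      by (simp add: real_sqrt_divide)
    finally have "sqrt ((2 * real m + 1) / 2) = sqrt (2 * (2 * real m + 1)) / 2" .
    then show ?thesis
      using assms unfolding phi_def legendre_def C_def by (simp add: field_simps)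
  qed
  ultimately show ?thesis by simp
qed

definition divergence_free :: "(real^3 \<Rightarrow> real^3) \<Rightarrow> bool" where
  "divergence_free \<Phi> \<longleftrightarrow> (\<forall>\<xi>. \<Phi> differentiable (at \<xi>) \<and> divergence \<Phi> \<xi> = 0)"

definition tangential_on_faces :: "(real^3 \<Rightarrow> real^3) \<Rightarrow> bool" where
  "tangential_on_faces \<Phi> \<longleftrightarrow> (\<forall>\<xi> i. \<bar>\<xi> $ i\<bar> = 1 \<longrightarrow> \<Phi> \<xi> $ i = 0)"

lemma divergence_eq_trace:
  assumes "(v has_derivative D) (at x)"
  shows "divergence v x = trace (matrix D)"
  using frechet_derivative_at[OF assms] by (simp add: divergence_def trace_def matrix_def)

lemma has_derivative_vec_nth_compose:
  assumes "(g has_real_derivative g') (at (\<xi> $ i))"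
  shows "((\<lambda>\<xi>. g (\<xi> $ i)) has_derivative (\<lambda>h. h $ i * g')) (at \<xi>)"
  using DERIV_compose_FDERIV[OF assms bounded_linear_imp_has_derivative[OF bounded_linear_vec_nth]] .

text \<open>With \<open>P' = p\<close> and \<open>Q' = q\<close>, this field is the curl of \<open>P(\<xi>\<^sub>i) Q(\<xi>\<^sub>j) R(\<xi>\<^sub>k) e\<^sub>k\<close> (up to orientation);
  all five families of reference fields are of this form.\<close>
lemma separable_field:
  fixes i j k :: 3 and P Q R p q :: "real \<Rightarrow> real"
  assumes ijk: "i \<noteq> j" "k \<noteq> i" "k \<noteq> j"
    and P: "\<And>t. (P has_real_derivative p t) (at t)" and Q: "\<And>t. (Q has_real_derivative q t) (at t)"
    and dpqR: "\<And>t. p differentiable (at t)" "\<And>t. q differentiable (at t)" "\<And>t. R differentiable (at t)"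
    and PQ_boundary: "\<And>t. \<bar>t\<bar> = 1 \<Longrightarrow> P t = 0" "\<And>t. \<bar>t\<bar> = 1 \<Longrightarrow> Q t = 0"
  defines "\<Phi> \<equiv> \<lambda>\<xi>. (P (\<xi>$i) * q (\<xi>$j) * R (\<xi>$k)) *\<^sub>R axis i 1 - (p (\<xi>$i) * Q (\<xi>$j) * R (\<xi>$k)) *\<^sub>R axis j 1"
  shows "divergence_free \<Phi>" "tangential_on_faces \<Phi>"
proof -
  show "divergence_free \<Phi>"
    unfolding divergence_free_def
  proof
    fix \<xi> :: "real^3"
    have d: "(f has_real_derivative deriv f t) (at t)" if "f differentiable (at t)" for f :: "real \<Rightarrow> real" and t
      using that DERIV_deriv_iff_real_differentiable by blast
    define D :: "real^3 \<Rightarrow> real^3" where "D h = (h $ i * p (\<xi>$i) * q (\<xi>$j) * R (\<xi>$k) + P (\<xi>$i) * (h $ j * deriv q (\<xi>$j)) * R (\<xi>$k)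
        + P (\<xi>$i) * q (\<xi>$j) * (h $ k * deriv R (\<xi>$k))) *\<^sub>R axis i 1
      - (h $ i * deriv p (\<xi>$i) * Q (\<xi>$j) * R (\<xi>$k) + p (\<xi>$i) * (h $ j * q (\<xi>$j)) * R (\<xi>$k)
        + p (\<xi>$i) * Q (\<xi>$j) * (h $ k * deriv R (\<xi>$k))) *\<^sub>R axis j 1" for h
    define c where "c = p (\<xi>$i) * q (\<xi>$j) * R (\<xi>$k)"
    have "(\<Phi> has_derivative D) (at \<xi>)"
      unfolding \<Phi>_def D_def
      by (rule derivative_eq_intros has_derivative_vec_nth_compose P Q d[OF dpqR(1)] d[OF dpqR(2)]
            d[OF dpqR(3)] refl | simp add: algebra_simps)+
    moreover have "D (axis l 1) $ l = (if l = i then c else 0) - (if l = j then c else 0)" for l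
      using ijk by (auto simp: D_def axis_def c_def)
    ultimately show "\<Phi> differentiable (at \<xi>) \<and> divergence \<Phi> \<xi> = 0"
      by (auto simp: differentiable_def divergence_eq_trace trace_def matrix_def sum_subtractf)
  qed
  show "tangential_on_faces \<Phi>"
    unfolding tangential_on_faces_def \<Phi>_def using ijk PQ_boundary by (auto simp: axis_def)
qed

lemma psi_phi_field:
  fixes i j k :: 3
  assumes "m \<ge> 1" "n \<ge> 1" "i \<noteq> j" "k \<noteq> i" "k \<noteq> j" "\<And>t. R differentiable (at t)"
    and "\<Phi> = (\<lambda>\<xi>. (psi (Suc m) (\<xi>$i) * phi n (\<xi>$j) * R (\<xi>$k)) *\<^sub>R axis i 1
                   - (phi m (\<xi>$i) * psi (Suc n) (\<xi>$j) * R (\<xi>$k)) *\<^sub>R axis j 1)"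
  shows "divergence_free \<Phi> \<and> tangential_on_faces \<Phi>"
  using separable_field[OF assms(3-5) has_real_derivative_psi_Suc has_real_derivative_psi_Suc
      phi_differentiable phi_differentiable assms(6) psi_Suc_at_boundary psi_Suc_at_boundary] assms(1,2,7)
  by blast

lemma Phi1_reference_field: "m \<ge> 1 \<Longrightarrow> n \<ge> 1 \<Longrightarrow> divergence_free (Phi1 m n l) \<and> tangential_on_faces (Phi1 m n l)"
  by (rule psi_phi_field[of m n 1 2 3 "phi l"])
    (auto simp: fun_eq_iff vec_eq_iff forall_3 Phi1_def axis_def phi_differentiable)

lemma Phi2_reference_field: "m \<ge> 1 \<Longrightarrow> l \<ge> 1 \<Longrightarrow> divergence_free (Phi2 m n l) \<and> tangential_on_faces (Phi2 m n l)"
  by (rule psi_phi_field[of m l 1 3 2 "phi n"])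
    (auto simp: fun_eq_iff vec_eq_iff forall_3 Phi2_def axis_def phi_differentiable)

lemma PhiX_reference_field: "n \<ge> 1 \<Longrightarrow> l \<ge> 1 \<Longrightarrow> divergence_free (PhiX n l) \<and> tangential_on_faces (PhiX n l)"
  by (rule psi_phi_field[of n l 2 3 1 "\<lambda>_. 1"])
    (auto simp: fun_eq_iff vec_eq_iff forall_3 PhiX_def axis_def)

lemma PhiY_reference_field: "m \<ge> 1 \<Longrightarrow> l \<ge> 1 \<Longrightarrow> divergence_free (PhiY m l) \<and> tangential_on_faces (PhiY m l)"
  by (rule psi_phi_field[of m l 1 3 2 "\<lambda>_. 1"])
    (auto simp: fun_eq_iff vec_eq_iff forall_3 PhiY_def axis_def)

lemma PhiZ_reference_field: "m \<ge> 1 \<Longrightarrow> n \<ge> 1 \<Longrightarrow> divergence_free (PhiZ m n) \<and> tangential_on_faces (PhiZ m n)"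
  by (rule psi_phi_field[of m n 1 2 3 "\<lambda>_. 1"])
    (auto simp: fun_eq_iff vec_eq_iff forall_3 PhiZ_def axis_def)

lemma basisN_subset_piola_reference_fields:
  "basisN N F \<subseteq> piola F ` {\<Phi>. divergence_free \<Phi> \<and> tangential_on_faces \<Phi>}"
  unfolding basisN_def
  by (intro image_mono)
    (auto simp: Phi1_reference_field Phi2_reference_field PhiX_reference_field PhiY_reference_field
      PhiZ_reference_field)

section \<open>Symmetry of second derivatives\<close>

lemma has_real_derivative_along_line:
  fixes g :: "'a::real_normed_vector \<Rightarrow> real"
  assumes "g differentiable (at (z + s *\<^sub>R a))"
  shows "((\<lambda>s. g (z + s *\<^sub>R a)) has_real_derivative frechet_derivative g (at (z + s *\<^sub>R a)) a) (at s)"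
proof -
  let ?D = "frechet_derivative g (at (z + s *\<^sub>R a))"
  have g: "(g has_derivative ?D) (at (z + s *\<^sub>R a))"
    using assms frechet_derivative_works by blast
  have "((\<lambda>s. z + s *\<^sub>R a) has_derivative (\<lambda>h. h *\<^sub>R a)) (at s)"
    by (auto intro!: derivative_eq_intros)
  from diff_chain_at[OF this g] have "((\<lambda>s. g (z + s *\<^sub>R a)) has_derivative (\<lambda>h. ?D (h *\<^sub>R a))) (at s)"
    by (simp add: o_def)
  moreover have "(\<lambda>h. ?D (h *\<^sub>R a)) = (*) (?D a)"
    using linear_scale[OF has_derivative_linear[OF g]] by (simp add: fun_eq_iff mult.commute)
  ultimately show ?thesis
    by (simp add: has_field_derivative_def)
qed

lemma second_difference_mean_value:
  fixes g :: "'a::real_normed_vector \<Rightarrow> real"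
  assumes t: "t > 0"
    and inU: "\<And>s r. s \<in> {0..t} \<Longrightarrow> r \<in> {0..t} \<Longrightarrow> x + s *\<^sub>R a + r *\<^sub>R b \<in> U"
    and dg: "\<And>y. y \<in> U \<Longrightarrow> g differentiable (at y)"
    and dga: "\<And>y. y \<in> U \<Longrightarrow> (\<lambda>y. frechet_derivative g (at y) a) differentiable (at y)"
  obtains \<sigma> \<tau> where "\<sigma> \<in> {0<..<t}" "\<tau> \<in> {0<..<t}"
    "g (x + t *\<^sub>R a + t *\<^sub>R b) - g (x + t *\<^sub>R a) - g (x + t *\<^sub>R b) + g x
       = t * t * frechet_derivative (\<lambda>y. frechet_derivative g (at y) a) (at (x + \<sigma> *\<^sub>R a + \<tau> *\<^sub>R b)) b"
proof -
  define ga where "ga y = frechet_derivative g (at y) a" for y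
  define \<phi> where "\<phi> s = g (x + t *\<^sub>R b + s *\<^sub>R a) - g (x + s *\<^sub>R a)" for s
  have "(\<phi> has_real_derivative ga (x + t *\<^sub>R b + s *\<^sub>R a) - ga (x + s *\<^sub>R a)) (at s)"
    if "0 \<le> s" "s \<le> t" for s
    unfolding \<phi>_def ga_def
  proof (intro DERIV_diff has_real_derivative_along_line dg)
    show "x + t *\<^sub>R b + s *\<^sub>R a \<in> U" using inU[of s t] that t by (simp add: algebra_simps)
    show "x + s *\<^sub>R a \<in> U" using inU[of s 0] that t by simp
  qed
  from MVT2[OF t this] obtain \<sigma> where \<sigma>: "0 < \<sigma>" "\<sigma> < t"
    and \<phi>_diff: "\<phi> t - \<phi> 0 = (t - 0) * (ga (x + t *\<^sub>R b + \<sigma> *\<^sub>R a) - ga (x + \<sigma> *\<^sub>R a))"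
    by blast
  define \<psi> where "\<psi> r = ga (x + \<sigma> *\<^sub>R a + r *\<^sub>R b)" for r
  have "(\<psi> has_real_derivative frechet_derivative ga (at (x + \<sigma> *\<^sub>R a + r *\<^sub>R b)) b) (at r)"
    if "0 \<le> r" "r \<le> t" for r
    unfolding \<psi>_def ga_def
    by (intro has_real_derivative_along_line dga inU) (use that \<sigma> in auto)
  from MVT2[OF t this] obtain \<tau> where \<tau>: "0 < \<tau>" "\<tau> < t"
    and \<psi>_diff: "\<psi> t - \<psi> 0 = (t - 0) * frechet_derivative ga (at (x + \<sigma> *\<^sub>R a + \<tau> *\<^sub>R b)) b"
    by blast
  have "g (x + t *\<^sub>R a + t *\<^sub>R b) - g (x + t *\<^sub>R a) - g (x + t *\<^sub>R b) + g x = \<phi> t - \<phi> 0"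
    unfolding \<phi>_def by (simp add: add_ac)
  also have "\<dots> = t * (\<psi> t - \<psi> 0)"
    unfolding \<phi>_diff \<psi>_def by (simp add: add_ac)
  also have "\<dots> = t * t * frechet_derivative ga (at (x + \<sigma> *\<^sub>R a + \<tau> *\<^sub>R b)) b"
    unfolding \<psi>_diff by simp
  finally show ?thesis
    using \<sigma> \<tau> unfolding ga_def by (intro that) simp_all
qed

lemma parallelogram_subset_ball:
  fixes x a b :: "'a::real_normed_vector"
  assumes "\<delta> > 0"
  obtains t where "t > 0" "\<And>s s'. s \<in> {0..t} \<Longrightarrow> s' \<in> {0..t} \<Longrightarrow> x + s *\<^sub>R a + s' *\<^sub>R b \<in> ball x \<delta>"
proof -
  define t where "t = \<delta> / (2 * (norm a + norm b + 1))"
  have ab: "norm a + norm b < 2 * (norm a + norm b + 1)" "0 < 2 * (norm a + norm b + 1)"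
    by (smt (verit) norm_ge_zero)+
  have "t * (norm a + norm b) = \<delta> * ((norm a + norm b) / (2 * (norm a + norm b + 1)))"
    by (simp add: t_def)
  also have "\<dots> < \<delta> * 1"
    by (rule mult_strict_left_mono[OF _ assms]) (use ab in \<open>simp only: divide_less_eq_1_pos\<close>)
  finally have t_small: "t * norm a + t * norm b < \<delta>"
    by (simp add: algebra_simps)
  show ?thesis
  proof (rule that)
    show "t > 0" using assms ab by (simp add: t_def)
    fix s s' assume "s \<in> {0..t}" "s' \<in> {0..t}"
    then have "norm (s *\<^sub>R a) + norm (s' *\<^sub>R b) \<le> t * norm a + t * norm b"
      by (auto intro!: add_mono mult_right_mono)
    then show "x + s *\<^sub>R a + s' *\<^sub>R b \<in> ball x \<delta>"
      using norm_triangle_ineq[of "s *\<^sub>R a" "s' *\<^sub>R b"] t_small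
      unfolding mem_ball dist_commute[of x] by (simp add: dist_norm add.assoc)
  qed
qed

lemma directional_derivatives_commute:
  fixes g :: "'a::real_normed_vector \<Rightarrow> real" and a b :: 'a
  defines "ga \<equiv> \<lambda>y. frechet_derivative g (at y) a" and "gb \<equiv> \<lambda>y. frechet_derivative g (at y) b"
  assumes U: "open U" "x \<in> U"
    and dg: "\<And>y. y \<in> U \<Longrightarrow> g differentiable (at y)"
    and dga: "\<And>y. y \<in> U \<Longrightarrow> ga differentiable (at y)"
    and dgb: "\<And>y. y \<in> U \<Longrightarrow> gb differentiable (at y)"
    and cab: "continuous_on U (\<lambda>y. frechet_derivative ga (at y) b)"
    and cba: "continuous_on U (\<lambda>y. frechet_derivative gb (at y) a)"
  shows "frechet_derivative ga (at x) b = frechet_derivative gb (at x) a"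
proof -
  define qab where "qab y = frechet_derivative ga (at y) b" for y
  define qba where "qba y = frechet_derivative gb (at y) a" for y
  have "isCont qab x" "isCont qba x"
    using cab cba U continuous_on_eq_continuous_at unfolding qab_def qba_def by blast+
  have bound: "\<bar>qab x - qba x\<bar> < \<epsilon> + \<epsilon>" if "\<epsilon> > 0" for \<epsilon>
  proof -
    obtain \<delta> where "\<delta> > 0" "ball x \<delta> \<subseteq> U"
      and close: "\<And>y. y \<in> ball x \<delta> \<Longrightarrow> \<bar>qab y - qab x\<bar> < \<epsilon> \<and> \<bar>qba y - qba x\<bar> < \<epsilon>"
    proof -
      have "\<exists>\<delta>>0. \<forall>y. dist y x < \<delta> \<longrightarrow> \<bar>q y - q x\<bar> < \<epsilon>" if "isCont q x" for q :: "'a \<Rightarrow> real"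
        using that \<open>\<epsilon> > 0\<close> unfolding continuous_at_eps_delta dist_real_def by blast
      then obtain \<delta>1 \<delta>2 where "\<delta>1 > 0" "\<And>y. dist y x < \<delta>1 \<Longrightarrow> \<bar>qab y - qab x\<bar> < \<epsilon>"
        and "\<delta>2 > 0" "\<And>y. dist y x < \<delta>2 \<Longrightarrow> \<bar>qba y - qba x\<bar> < \<epsilon>"
        using \<open>isCont qab x\<close> \<open>isCont qba x\<close> by metis
      moreover obtain r where "r > 0" "ball x r \<subseteq> U"
        using U open_contains_ball by blast
      ultimately show ?thesis
        using that[of "min r (min \<delta>1 \<delta>2)"] by (simp add: dist_commute subset_eq)
    qed
    obtain t where t: "t > 0" "\<And>s s'. s \<in> {0..t} \<Longrightarrow> s' \<in> {0..t} \<Longrightarrow> x + s *\<^sub>R a + s' *\<^sub>R b \<in> ball x \<delta>"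
      using parallelogram_subset_ball[OF \<open>\<delta> > 0\<close>] by blast
    then have inU: "x + s *\<^sub>R a + s' *\<^sub>R b \<in> U" "x + s' *\<^sub>R b + s *\<^sub>R a \<in> U"
      if "s \<in> {0..t}" "s' \<in> {0..t}" for s s'
    proof -
      have "x + s *\<^sub>R a + s' *\<^sub>R b \<in> U"
        using t(2)[OF that] \<open>ball x \<delta> \<subseteq> U\<close> by blast
      moreover have "x + s' *\<^sub>R b + s *\<^sub>R a = x + s *\<^sub>R a + s' *\<^sub>R b"
        by (simp add: algebra_simps)
      ultimately show "x + s *\<^sub>R a + s' *\<^sub>R b \<in> U" "x + s' *\<^sub>R b + s *\<^sub>R a \<in> U"
        by metis+
    qed
    obtain \<sigma> \<tau> where "\<sigma> \<in> {0<..<t}" "\<tau> \<in> {0<..<t}"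
      and \<Delta>ab: "g (x + t *\<^sub>R a + t *\<^sub>R b) - g (x + t *\<^sub>R a) - g (x + t *\<^sub>R b) + g x
        = t * t * qab (x + \<sigma> *\<^sub>R a + \<tau> *\<^sub>R b)"
      using second_difference_mean_value[OF t(1) inU(1) dg dga[unfolded ga_def]]
      unfolding qab_def ga_def by blast
    obtain \<sigma>' \<tau>' where "\<sigma>' \<in> {0<..<t}" "\<tau>' \<in> {0<..<t}"
      and \<Delta>ba: "g (x + t *\<^sub>R b + t *\<^sub>R a) - g (x + t *\<^sub>R b) - g (x + t *\<^sub>R a) + g x
        = t * t * qba (x + \<sigma>' *\<^sub>R b + \<tau>' *\<^sub>R a)"
      using second_difference_mean_value[OF t(1) inU(2) dg dgb[unfolded gb_def]]
      unfolding qba_def gb_def by blast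
    define y1 where "y1 = x + \<sigma> *\<^sub>R a + \<tau> *\<^sub>R b"
    define y2 where "y2 = x + \<tau>' *\<^sub>R a + \<sigma>' *\<^sub>R b"
    have "t * t * qab y1 = t * t * qba y2"
      using \<Delta>ab \<Delta>ba unfolding y1_def y2_def by (simp add: algebra_simps)
    then have "qab x - qba x = (qba y2 - qba x) - (qab y1 - qab x)"
      using t(1) by simp
    then have "\<bar>qab x - qba x\<bar> \<le> \<bar>qba y2 - qba x\<bar> + \<bar>qab y1 - qab x\<bar>"
      by (simp only: abs_triangle_ineq4)
    also have "\<dots> < \<epsilon> + \<epsilon>"
    proof (rule add_strict_mono)
      have "y1 \<in> ball x \<delta>" "y2 \<in> ball x \<delta>"
        unfolding y1_def y2_def using t(2) \<open>\<sigma> \<in> _\<close> \<open>\<tau> \<in> _\<close> \<open>\<sigma>' \<in> _\<close> \<open>\<tau>' \<in> _\<close> by auto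
      then show "\<bar>qba y2 - qba x\<bar> < \<epsilon>" "\<bar>qab y1 - qab x\<bar> < \<epsilon>"
        using close by blast+
    qed
    finally show ?thesis .
  qed
  show ?thesis
  proof (rule ccontr)
    assume "frechet_derivative ga (at x) b \<noteq> frechet_derivative gb (at x) a"
    then have "\<bar>qab x - qba x\<bar> / 2 > 0"
      by (simp add: qab_def qba_def)
    from bound[OF this] have "\<bar>qab x - qba x\<bar> < \<bar>qab x - qba x\<bar>"
      by (simp only: field_sum_of_halves)
    then show False
      by simp
  qed
qed

lemma has_derivative_vec_lambda:
  fixes f :: "'a::real_normed_vector \<Rightarrow> 'n::finite \<Rightarrow> 'b::euclidean_space"
  assumes "\<And>i. ((\<lambda>y. f y i) has_derivative f' i) (at x within S)"
  shows "((\<lambda>y. \<chi> i. f y i) has_derivative (\<lambda>h. \<chi> i. f' i h)) (at x within S)"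
proof (subst has_derivative_componentwise_within, intro ballI)
  fix e :: "'b^'n" assume "e \<in> Basis"
  then obtain i u where e: "e = axis i u" "u \<in> Basis" by (auto simp: Basis_vec_def)
  show "((\<lambda>y. (\<chi> i. f y i) \<bullet> e) has_derivative (\<lambda>h. (\<chi> i. f' i h) \<bullet> e)) (at x within S)"
    unfolding e inner_axis by (simp add: bounded_linear.has_derivative[OF bounded_linear_inner_left assms])
qed

lemma has_derivative_matrix_entry:
  fixes A :: "'a::real_normed_vector \<Rightarrow> real^'n^'m"
  assumes "(A has_derivative A') F"
  shows "((\<lambda>y. A y $ i $ j) has_derivative (\<lambda>h. A' h $ i $ j)) F"
  using bounded_linear.has_derivative[OF bounded_linear_vec_nth bounded_linear.has_derivative[OF bounded_linear_vec_nth assms]] .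

lemma bounded_bilinear_matrix_vector_mult: "bounded_bilinear (\<lambda>(A::real^'n^'m) v. A *v v)"
  unfolding bilinear_conv_bounded_bilinear[symmetric] bilinear_def
  by (auto simp: linear_iff matrix_vector_mult_def vec_eq_iff sum.distrib algebra_simps sum_distrib_left)

definition adjugate3 :: "real^3^3 \<Rightarrow> real^3^3" where
  "adjugate3 A = vector [
     vector [A$2$2 * A$3$3 - A$2$3 * A$3$2, A$1$3 * A$3$2 - A$1$2 * A$3$3, A$1$2 * A$2$3 - A$1$3 * A$2$2],
     vector [A$2$3 * A$3$1 - A$2$1 * A$3$3, A$1$1 * A$3$3 - A$1$3 * A$3$1, A$1$3 * A$2$1 - A$1$1 * A$2$3],
     vector [A$2$1 * A$3$2 - A$2$2 * A$3$1, A$1$2 * A$3$1 - A$1$1 * A$3$2, A$1$1 * A$2$2 - A$1$2 * A$2$1]]"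

lemma adjugate3_mult: "adjugate3 A ** A = det A *\<^sub>R mat 1" "A ** adjugate3 A = det A *\<^sub>R mat 1"
  by (simp_all add: vec_eq_iff forall_3 matrix_matrix_mult_def sum_3 adjugate3_def det_3 mat_def algebra_simps)

lemma has_derivative_det3:
  assumes "(A has_derivative A') (at x within S)"
  shows "((\<lambda>y. det (A y)) has_derivative (\<lambda>h. trace (adjugate3 (A x) ** A' h))) (at x within S)"
  unfolding det_3
  by (rule derivative_eq_intros has_derivative_matrix_entry[OF assms] refl)+
    (simp add: fun_eq_iff trace_def matrix_matrix_mult_def sum_3 adjugate3_def algebra_simps)

lemma cross3_matrix_vector_mult_inner:
  "cross3 (A *v a) (A *v b) \<bullet> (A *v c) = det A * (cross3 a b \<bullet> c)"
  by (simp add: cross3_simps matrix_vector_mult_def)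

lemma trace_scaleR: "trace (c *\<^sub>R A) = c * trace (A :: real^'n^'n)"
  by (simp add: trace_def sum_distrib_left)

lemma sum_diag_symmetric_contraction:
  fixes C :: "'a::comm_semiring_1^'n^'n" and Q :: "'n \<Rightarrow> 'a^'n^'n"
  assumes "\<And>i j k. Q k $ i $ j = Q j $ i $ k"
  shows "(\<Sum>k\<in>UNIV. (C ** Q k *v v) $ k) = (\<Sum>j\<in>UNIV. trace (C ** Q j) * v $ j)"
proof -
  have "(\<Sum>k\<in>UNIV. (C ** Q k *v v) $ k) = (\<Sum>k\<in>UNIV. \<Sum>j\<in>UNIV. \<Sum>i\<in>UNIV. C $ k $ i * Q j $ i $ k * v $ j)"
    by (simp add: matrix_matrix_mult_def matrix_vector_mult_def sum_distrib_right assms mult.assoc)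
  also have "\<dots> = (\<Sum>j\<in>UNIV. \<Sum>k\<in>UNIV. \<Sum>i\<in>UNIV. C $ k $ i * Q j $ i $ k * v $ j)"
    by (rule sum.swap)
  also have "\<dots> = (\<Sum>j\<in>UNIV. trace (C ** Q j) * v $ j)"
    by (simp add: trace_def matrix_matrix_mult_def sum_distrib_right)
  finally show ?thesis .
qed

text \<open>The Piola identity: the derivative of the Jacobian and the derivative of its determinant
  cancel in the trace, because second derivatives of the map are symmetric.\<close>
lemma trace_adjugate3_mult_piola_derivative:
  fixes J :: "real^3^3" and Q :: "real^3 \<Rightarrow> real^3^3" and \<Phi>' :: "real^3 \<Rightarrow> real^3"
  assumes det: "det J \<noteq> 0" and sym: "\<And>i j k. Q (axis k 1) $ i $ j = Q (axis j 1) $ i $ k"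
  shows "trace (adjugate3 J ** matrix (\<lambda>h. (1 / det J) *\<^sub>R (Q h *v v + J *v \<Phi>' h)
            - (trace (adjugate3 J ** Q h) / det J ^ 2) *\<^sub>R (J *v v)))
         = trace (matrix \<Phi>')"
    (is "trace (?C ** matrix ?H) = _")
proof -
  have CJ: "?C *v (J *v w) = det J *\<^sub>R w" for w
    by (simp add: matrix_vector_mul_assoc adjugate3_mult flip: scaleR_matrix_vector_assoc)
  have diag: "(?C ** matrix ?H) $ k $ k = (?C ** Q (axis k 1) *v v) $ k / det J + \<Phi>' (axis k 1) $ k
      - trace (?C ** Q (axis k 1)) * v $ k / det J" for k
  proof -
    have "(?C ** matrix ?H) $ k $ k = (?C *v ?H (axis k 1)) $ k"
      by (simp add: matrix_matrix_mult_def matrix_vector_mult_def matrix_def)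
    also have "\<dots> = ((1 / det J) *\<^sub>R (?C *v (Q (axis k 1) *v v) + det J *\<^sub>R \<Phi>' (axis k 1))
        - (trace (?C ** Q (axis k 1)) / det J ^ 2) *\<^sub>R (det J *\<^sub>R v)) $ k"
      by (simp only: vec.diff vec.add linear_scale[OF matrix_vector_mul_linear] CJ)
    also have "\<dots> = (?C ** Q (axis k 1) *v v) $ k / det J + \<Phi>' (axis k 1) $ k
      - trace (?C ** Q (axis k 1)) * v $ k / det J"
      using det by (simp add: matrix_vector_mul_assoc power2_eq_square field_simps)
    finally show ?thesis .
  qed
  have "trace (?C ** matrix ?H) = (\<Sum>k\<in>UNIV. (?C ** matrix ?H) $ k $ k)"
    by (simp only: trace_def)
  also have "\<dots> = (\<Sum>k\<in>UNIV. (?C ** Q (axis k 1) *v v) $ k) / det J + trace (matrix \<Phi>')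
      - (\<Sum>k\<in>UNIV. trace (?C ** Q (axis k 1)) * v $ k) / det J"
    unfolding diag by (simp add: sum.distrib sum_subtractf sum_divide_distrib trace_def matrix_def)
  finally show ?thesis
    using sum_diag_symmetric_contraction[of "\<lambda>k. Q (axis k 1)", OF sym] by simp
qed

lemma has_derivative_piola_integrand:
  assumes A: "(A has_derivative A') (at x)" and \<Phi>: "(\<Phi> has_derivative \<Phi>') (at x)"
    and det: "det (A x) \<noteq> 0"
  shows "((\<lambda>y. (1 / det (A y)) *\<^sub>R (A y *v \<Phi> y)) has_derivative
     (\<lambda>h. (1 / det (A x)) *\<^sub>R (A' h *v \<Phi> x + A x *v \<Phi>' h)
        - (trace (adjugate3 (A x) ** A' h) / det (A x) ^ 2) *\<^sub>R (A x *v \<Phi> x))) (at x)"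
  by (rule derivative_eq_intros has_derivative_det3[OF A] A \<Phi> det
      bounded_bilinear.FDERIV[OF bounded_bilinear_matrix_vector_mult] refl)+
    (simp add: fun_eq_iff algebra_simps power2_eq_square)

lemma smooth_on_partials:
  assumes "smooth_on U F"
  shows "\<And>x. x \<in> U \<Longrightarrow> (\<lambda>y. F y $ i) differentiable (at x)"
    and "continuous_on U (\<lambda>y. frechet_derivative (\<lambda>y. F y $ i) (at y) (axis j 1))"
    and "\<And>x. x \<in> U \<Longrightarrow> (\<lambda>y. frechet_derivative (\<lambda>y. F y $ i) (at y) (axis j 1)) differentiable (at x)"
    and "continuous_on U (\<lambda>y. frechet_derivative (\<lambda>y. frechet_derivative (\<lambda>y. F y $ i) (at y) (axis j 1)) (at y) (axis k 1))"
  using assms[unfolded smooth_on_def, THEN spec[of _ "Suc (Suc 0)"], THEN spec[of _ i]] by auto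

lemma smooth_on_has_derivative_jac:
  assumes "smooth_on U F" "x \<in> U"
  shows "(F has_derivative (*v) (jac F x)) (at x)"
    and "jac F x = (\<chi> i j. frechet_derivative (\<lambda>y. F y $ i) (at x) (axis j 1))"
proof -
  have "F differentiable (at x)"
    using smooth_on_partials(1)[OF assms]
    by (subst differentiable_componentwise_within) (auto simp: Basis_vec_def inner_axis)
  then have F: "(F has_derivative frechet_derivative F (at x)) (at x)"
    using frechet_derivative_works by blast
  then show "(F has_derivative (*v) (jac F x)) (at x)"
    unfolding jac_def by (simp add: matrix_works has_derivative_linear)
  have "frechet_derivative (\<lambda>y. F y $ i) (at x) = (\<lambda>h. frechet_derivative F (at x) h $ i)" for i
    using frechet_derivative_at[OF bounded_linear.has_derivative[OF bounded_linear_vec_nth F]] by simp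
  then show "jac F x = (\<chi> i j. frechet_derivative (\<lambda>y. F y $ i) (at x) (axis j 1))"
    by (simp add: jac_def matrix_def)
qed

lemma smooth_on_continuous_on_jac:
  assumes "smooth_on U F"
  shows "continuous_on U (jac F)"
proof -
  have "continuous_on U (\<lambda>x. \<chi> i j. frechet_derivative (\<lambda>y. F y $ i) (at x) (axis j 1))"
    by (intro continuous_on_vec_lambda smooth_on_partials(2)[OF assms])
  then show ?thesis
    by (rule continuous_on_cong[THEN iffD1, rotated 2]) (simp_all add: smooth_on_has_derivative_jac(2)[OF assms])
qed

lemma smooth_on_jac_has_symmetric_derivative:
  assumes "smooth_on U F" "open U" "x \<in> U"
  obtains A' where "(jac F has_derivative A') (at x)"
    and "\<And>i j k. A' (axis k 1) $ i $ j = A' (axis j 1) $ i $ k"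
proof -
  define P where "P i j = (\<lambda>y. frechet_derivative (\<lambda>y. F y $ i) (at y) (axis j 1))" for i j
  define A' where "A' h = (\<chi> i j. frechet_derivative (P i j) (at x) h)" for h
  have "((\<lambda>y. \<chi> i j. P i j y) has_derivative A') (at x)"
    unfolding A'_def using smooth_on_partials(3)[OF assms(1,3)]
    by (intro has_derivative_vec_lambda) (simp add: P_def frechet_derivative_works)
  then have "(jac F has_derivative A') (at x)"
    by (rule has_derivative_transform_within_open[OF _ assms(2,3)])
      (simp add: smooth_on_has_derivative_jac(2)[OF assms(1)] P_def)
  moreover have "A' (axis k 1) $ i $ j = A' (axis j 1) $ i $ k" for i j k
    unfolding A'_def P_def
    by (simp, rule directional_derivatives_commute[OF assms(2,3)])
      (use smooth_on_partials[OF assms(1)] in auto)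
  ultimately show ?thesis using that by blast
qed

section \<open>The Piola transformation\<close>

lemma piola_eq_compose:
  "piola F \<Phi> = (\<lambda>\<xi>. (1 / det (jac F \<xi>)) *\<^sub>R (jac F \<xi> *v \<Phi> \<xi>)) \<circ> inv_into cube F"
  by (simp add: fun_eq_iff piola_def Let_def)

lemma piola_normal_flux:
  assumes "inj_on F cube" "\<xi> \<in> cube" "det (jac F \<xi>) \<noteq> 0"
  shows "cross3 (jac F \<xi> *v a) (jac F \<xi> *v b) \<bullet> piola F \<Phi> (F \<xi>) = cross3 a b \<bullet> \<Phi> \<xi>"
proof -
  have "piola F \<Phi> (F \<xi>) = (1 / det (jac F \<xi>)) *\<^sub>R (jac F \<xi> *v \<Phi> \<xi>)"
    using assms(1,2) by (simp add: piola_def)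
  then show ?thesis
    using assms(3) by (simp add: cross3_matrix_vector_mult_inner)
qed

lemma continuous_on_piola:
  assumes F: "smooth_on U F" "cube \<subseteq> U" "inj_on F cube" "\<forall>\<xi>\<in>cube. det (jac F \<xi>) \<noteq> 0"
    and \<Phi>: "continuous_on cube \<Phi>"
  shows "continuous_on (F ` cube) (piola F \<Phi>)"
  unfolding piola_eq_compose
proof (rule continuous_on_compose)
  have "continuous_on U F"
    using smooth_on_has_derivative_jac(1)[OF F(1)]
    by (meson continuous_at_imp_continuous_on has_derivative_continuous)
  then show "continuous_on (F ` cube) (inv_into cube F)"
    using F(2,3) by (intro continuous_on_inv) (auto intro: continuous_on_subset)
  have J: "continuous_on cube (jac F)"
    using smooth_on_continuous_on_jac[OF F(1)] F(2) by (rule continuous_on_subset)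
  have "continuous_on cube (\<lambda>\<xi>. det (jac F \<xi>))"
    unfolding det_3 by (intro continuous_intros J)
  moreover have "inv_into cube F ` F ` cube = cube"
    using F(3) by (simp add: inv_into_image_cancel)
  ultimately show "continuous_on (inv_into cube F ` F ` cube) (\<lambda>\<xi>. (1 / det (jac F \<xi>)) *\<^sub>R (jac F \<xi> *v \<Phi> \<xi>))"
    using F(4) by (auto intro!: continuous_on_scaleR continuous_on_divide
        bounded_bilinear.continuous_on[OF bounded_bilinear_matrix_vector_mult] J \<Phi>)
qed

lemma has_derivative_inv_into_cube:
  assumes F: "smooth_on U F" "cube \<subseteq> U" "inj_on F cube"
    and \<xi>: "\<xi> \<in> open_cube" and det: "det (jac F \<xi>) \<noteq> 0"
  shows "(inv_into cube F has_derivative (*v) ((1 / det (jac F \<xi>)) *\<^sub>R adjugate3 (jac F \<xi>))) (at (F \<xi>))"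
proof (rule has_derivative_inverse_strong[OF open_box \<xi>])
  have "open_cube \<subseteq> U" using F(2) box_subset_cbox by blast
  then show "continuous_on open_cube F"
    using smooth_on_has_derivative_jac(1)[OF F(1)]
    by (meson continuous_at_imp_continuous_on has_derivative_continuous subsetD)
  show "(F has_derivative (*v) (jac F \<xi>)) (at \<xi>)"
    using smooth_on_has_derivative_jac(1)[OF F(1)] \<xi> F(2) box_subset_cbox by blast
  show "inv_into cube F (F x) = x" if "x \<in> open_cube" for x
    using F(3) that box_subset_cbox by (blast intro: inv_into_f_f)
  show "(*v) (jac F \<xi>) \<circ> (*v) ((1 / det (jac F \<xi>)) *\<^sub>R adjugate3 (jac F \<xi>)) = id"
    using det by (simp add: fun_eq_iff matrix_vector_mul_assoc matrix_scalar_ac adjugate3_mult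
        flip: scalar_matrix_assoc)
qed

lemma divergence_piola:
  assumes F: "smooth_on U F" "open U" "cube \<subseteq> U" "inj_on F cube" "\<forall>\<xi>\<in>cube. det (jac F \<xi>) \<noteq> 0"
    and \<xi>: "\<xi> \<in> open_cube" and \<Phi>: "\<Phi> differentiable (at \<xi>)"
  shows "piola F \<Phi> differentiable (at (F \<xi>))"
    and "divergence (piola F \<Phi>) (F \<xi>) = divergence \<Phi> \<xi> / det (jac F \<xi>)"
proof -
  define J where "J = jac F \<xi>"
  define B where "B = (1 / det J) *\<^sub>R adjugate3 J"
  define \<Phi>' where "\<Phi>' = frechet_derivative \<Phi> (at \<xi>)"
  have \<xi>_cube: "\<xi> \<in> cube" using \<xi> box_subset_cbox by blast
  then have det: "det J \<noteq> 0" using F(5) by (simp add: J_def)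
  obtain A' where A': "(jac F has_derivative A') (at \<xi>)"
    and sym: "\<And>i j k. A' (axis k 1) $ i $ j = A' (axis j 1) $ i $ k"
    using smooth_on_jac_has_symmetric_derivative[OF F(1,2)] \<xi>_cube F(3) by blast
  define H' where "H' h = (1 / det J) *\<^sub>R (A' h *v \<Phi> \<xi> + J *v \<Phi>' h)
      - (trace (adjugate3 J ** A' h) / det J ^ 2) *\<^sub>R (J *v \<Phi> \<xi>)" for h
  have H: "((\<lambda>\<eta>. (1 / det (jac F \<eta>)) *\<^sub>R (jac F \<eta> *v \<Phi> \<eta>)) has_derivative H') (at \<xi>)"
    unfolding H'_def J_def \<Phi>'_def
    using has_derivative_piola_integrand[OF A' \<Phi>[unfolded frechet_derivative_works]] det[unfolded J_def] .
  moreover have "(inv_into cube F has_derivative (*v) B) (at (F \<xi>))"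
    unfolding B_def J_def using has_derivative_inv_into_cube[OF F(1,3,4) \<xi>] det[unfolded J_def] .
  moreover have "inv_into cube F (F \<xi>) = \<xi>"
    using F(4) \<xi>_cube by (rule inv_into_f_f)
  ultimately have D: "(piola F \<Phi> has_derivative H' \<circ> (*v) B) (at (F \<xi>))"
    unfolding piola_eq_compose by (intro diff_chain_at) simp_all
  then show "piola F \<Phi> differentiable (at (F \<xi>))"
    unfolding differentiable_def by blast
  have "linear H'"
    using has_derivative_linear[OF H] .
  have "divergence (piola F \<Phi>) (F \<xi>) = trace (matrix H' ** B)"
    using divergence_eq_trace[OF D] matrix_compose[OF matrix_vector_mul_linear[of B] \<open>linear H'\<close>] by simp
  also have "\<dots> = trace (B ** matrix H')"
    by (rule trace_mul_sym)
  also have "\<dots> = trace (adjugate3 J ** matrix H') / det J"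
    by (simp add: B_def trace_scaleR flip: scalar_matrix_assoc)
  also have "\<dots> = trace (matrix \<Phi>') / det J"
    unfolding H'_def using trace_adjugate3_mult_piola_derivative[OF det sym] by simp
  also have "\<dots> = divergence \<Phi> \<xi> / det (jac F \<xi>)"
    using divergence_eq_trace \<Phi> frechet_derivative_works unfolding \<Phi>'_def J_def by metis
  finally show "divergence (piola F \<Phi>) (F \<xi>) = divergence \<Phi> \<xi> / det (jac F \<xi>)" .
qed

lemma cross3_axis_inner_eq_0:
  fixes w :: "real^3"
  assumes "j \<noteq> i" "k \<noteq> i" "w $ i = 0"
  shows "cross3 (axis j 1) (axis k 1) \<bullet> w = 0"
  using exhaust_3[of i] exhaust_3[of j] exhaust_3[of k] assms
  by (auto simp: cross3_simps axis_def)

lemma divergence_linear_combination: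
  assumes "finite S" "\<And>b. b \<in> S \<Longrightarrow> b differentiable (at x)"
  shows "(\<lambda>y. \<Sum>b\<in>S. c b *\<^sub>R b y) differentiable (at x)"
    and "divergence (\<lambda>y. \<Sum>b\<in>S. c b *\<^sub>R b y) x = (\<Sum>b\<in>S. c b * divergence b x)"
proof -
  have D: "((\<lambda>y. \<Sum>b\<in>S. c b *\<^sub>R b y) has_derivative
      (\<lambda>h. \<Sum>b\<in>S. c b *\<^sub>R frechet_derivative b (at x) h)) (at x)"
    using assms by (intro has_derivative_sum has_derivative_scaleR_right) (simp add: frechet_derivative_works)
  then show "(\<lambda>y. \<Sum>b\<in>S. c b *\<^sub>R b y) differentiable (at x)"
    unfolding differentiable_def by blast
  show "divergence (\<lambda>y. \<Sum>b\<in>S. c b *\<^sub>R b y) x = (\<Sum>b\<in>S. c b * divergence b x)"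
    unfolding frechet_derivative_at[OF D, symmetric] divergence_def
    by (simp add: sum_component sum_distrib_left) (rule sum.swap)
qed

definition conforming_div0 :: "(real^3 \<Rightarrow> real^3) \<Rightarrow> (real^3 \<Rightarrow> real^3) \<Rightarrow> bool" where
  "conforming_div0 F v \<longleftrightarrow>
     continuous_on (F ` cube) v
   \<and> (\<forall>x \<in> F ` open_cube. v differentiable (at x) \<and> divergence v x = 0)
   \<and> (\<forall>\<xi> \<in> cube. \<forall>i. \<bar>\<xi> $ i\<bar> = 1 \<longrightarrow>
        (\<forall>j k. j \<noteq> i \<longrightarrow> k \<noteq> i \<longrightarrow>
           (cross3 (jac F \<xi> *v axis j 1) (jac F \<xi> *v axis k 1)) \<bullet> v (F \<xi>) = 0))"

lemma conforming_div0_fspan: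
  assumes "\<And>b. b \<in> B \<Longrightarrow> conforming_div0 F b" "v \<in> fspan B"
  shows "conforming_div0 F v"
proof -
  obtain S c where S: "finite S" "S \<subseteq> B" and v: "v = (\<lambda>x. \<Sum>b\<in>S. c b *\<^sub>R b x)"
    using assms(2) unfolding fspan_def by blast
  have b: "conforming_div0 F b" if "b \<in> S" for b
    using assms(1) S(2) that by blast
  show ?thesis
    unfolding conforming_div0_def v
  proof (intro conjI ballI allI impI)
    show "continuous_on (F ` cube) (\<lambda>x. \<Sum>b\<in>S. c b *\<^sub>R b x)"
      using b by (intro continuous_intros) (simp add: conforming_div0_def)
    fix x assume x: "x \<in> F ` open_cube"
    have "b differentiable (at x)" "divergence b x = 0" if "b \<in> S" for b
      using b[OF that] x unfolding conforming_div0_def by blast+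
    then show "(\<lambda>x. \<Sum>b\<in>S. c b *\<^sub>R b x) differentiable (at x)"
      and "divergence (\<lambda>x. \<Sum>b\<in>S. c b *\<^sub>R b x) x = 0"
      using divergence_linear_combination[OF S(1)] by simp_all
  next
    fix \<xi> i j k assume "\<xi> \<in> cube" "\<bar>\<xi> $ i\<bar> = 1" "j \<noteq> i" "k \<noteq> i"
    then show "cross3 (jac F \<xi> *v axis j 1) (jac F \<xi> *v axis k 1) \<bullet> (\<Sum>b\<in>S. c b *\<^sub>R b (F \<xi>)) = 0"
      using b by (simp add: inner_sum_right conforming_div0_def)
  qed
qed

lemma conforming_div0_piola:
  assumes F: "smooth_on U F" "open U" "cube \<subseteq> U" "inj_on F cube" "\<forall>\<xi>\<in>cube. det (jac F \<xi>) \<noteq> 0"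
    and \<Phi>: "divergence_free \<Phi>" "tangential_on_faces \<Phi>"
  shows "conforming_div0 F (piola F \<Phi>)"
  unfolding conforming_div0_def
proof (intro conjI ballI allI impI)
  have "continuous_on cube \<Phi>"
    using \<Phi>(1) unfolding divergence_free_def
    by (meson continuous_at_imp_continuous_on differentiable_imp_continuous_within)
  then show "continuous_on (F ` cube) (piola F \<Phi>)"
    by (rule continuous_on_piola[OF F(1,3,4,5)])
  fix x assume "x \<in> F ` open_cube"
  then obtain \<xi> where "\<xi> \<in> open_cube" "x = F \<xi>" by blast
  then show "piola F \<Phi> differentiable (at x)" "divergence (piola F \<Phi>) x = 0"
    using divergence_piola[OF F] \<Phi>(1) unfolding divergence_free_def by simp_all
next
  fix \<xi> i j k assume "\<xi> \<in> cube" "\<bar>\<xi> $ i\<bar> = 1" "j \<noteq> i" "k \<noteq> i"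
  then show "cross3 (jac F \<xi> *v axis j 1) (jac F \<xi> *v axis k 1) \<bullet> piola F \<Phi> (F \<xi>) = 0"
    using piola_normal_flux[OF F(4)] F(5) cross3_axis_inner_eq_0 \<Phi>(2)
    unfolding tangential_on_faces_def by simp
qed

theorem proposition2p4:
  fixes N :: nat and F :: "real^3 \<Rightarrow> real^3" and U :: "(real^3) set"
  assumes "N \<ge> 2"
    and "open U" and "cube \<subseteq> U"
    and "smooth_on U F"
    and "inj_on F cube"
    and "\<forall>\<xi>\<in>cube. det (jac F \<xi>) \<noteq> 0"
  shows "\<forall>v \<in> HN0_div0 N F.
           continuous_on (F ` cube) v
         \<and> (\<forall>x \<in> F ` open_cube. v differentiable (at x) \<and> divergence v x = 0)
         \<and> (\<forall>\<xi> \<in> cube. \<forall>i. \<bar>\<xi> $ i\<bar> = 1 \<longrightarrow>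
               (\<forall>j k. j \<noteq> i \<longrightarrow> k \<noteq> i \<longrightarrow>
                  (cross3 (jac F \<xi> *v axis j 1) (jac F \<xi> *v axis k 1)) \<bullet> v (F \<xi>) = 0))"
proof -
  have "conforming_div0 F b" if "b \<in> basisN N F" for b
    using basisN_subset_piola_reference_fields that conforming_div0_piola[OF assms(4,2,3,5,6)] by blast
  then have "\<forall>v \<in> HN0_div0 N F. conforming_div0 F v"
    unfolding HN0_div0_def using conforming_div0_fspan by blast
  then show ?thesis
    unfolding conforming_div0_def .
qed

end
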